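(* Let $\Lambda,\Delta\in\mathcal T_b$ satisfy $\Delta\cap\Lambda=\emptyset$, $\Delta\cap\Lambda_+=\emptyset$ and $\Lambda_-\cap\Delta_+=\emptyset$, let $\gamma_\Lambda,\gamma_\Delta$ be proper oriented kernels on $\Lambda$ and $\Delta$, and put $\Gamma=\Lambda\cup\Delta$. Then: (i) $\Gamma\in\mathcal T_b$, $\Gamma_+=\Lambda_+\cup(\Delta_+\setminus\Lambda)$ and $\Gamma_-=\Delta_-\cup(\Lambda_-\setminus\Delta)$; (ii) for every $A\in\mathcal F_{S\setminus\Gamma_+}$ the function $\gamma_\Lambda(A,\cdot)$ is $\mathcal F_{S\setminus\Delta_+}$-measurable, so that $\gamma_\Gamma(A,\omega):=\int\gamma_\Lambda(A,\sigma)\,\gamma_\Delta(d\sigma,\omega)$ is well defined, and $\gamma_\Gamma=\gamma_\Delta\gamma_\Lambda$ is a proper oriented kernel on $\Gamma$.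
   Context: $(S,\le)$ is a countable partially ordered set. For $x\in S$ write $x_-=\{y\in S:y<x\}$, $x_+=\{y\in S:y>x\}$. For $\Upsilon\subset S$: $\max(\Upsilon)=\{x\in\Upsilon: y\notin\Upsilon\text{ for all }y>x\}$, $\min(\Upsilon)=\{x\in\Upsilon: y\notin\Upsilon\text{ for all }y<x\}$, the past $\Upsilon_-=\{x\in S\setminus\Upsilon:\exists y\in\Upsilon,\ x<y\}$, the future $\Upsilon_+=\{x\in S\setminus\Upsilon:\exists y\in\Upsilon,\ x>y\}$, and the outer time $\Upsilon^*=\{x\in S: x\text{ is comparable with no }y\in\Upsilon\}$. Standing assumptions: for every $x\in S$, $\max(x_-)$ and $\min(x_+)$ are finite, every $y<x$ satisfies $y\le y_0<x$ for some $y_0\in\max(x_-)$, every $z>x$ satisfies $z\ge z_0>x$ for some $z_0\in\min(x_+)$; and $S$ has no minimal element. A finite set $\Lambda\subset S$ is a time box if $\Lambda_-\cap\Lambda_+=\emptyset$; $\mathcal T_b$ is the set of time boxes. $(E,\mathcal E)$ is a measurable space, $\Omega=E^S$ with product $\sigma$-algebra $\mathcal F$; $\mathcal F_\Upsilon$ is generated by coordinates in $\Upsilon$. A proper oriented kernel on $\Lambda\in\mathcal T_b$ is a map $\gamma_\Lambda:\mathcal F_{S\setminus\Lambda_+}\times\Omega\to[0,1]$ such that (a) $\gamma_\Lambda(\cdot,\omega)$ is a probability measure for each $\omega$; (b) $\gamma_\Lambda(A,\cdot)$ is $\mathcal F_{\Lambda_-\cup\Lambda^*}$-measurable for each $A\in\mathcal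 F_{S\setminus\Lambda_+}$; (c) $\gamma_\Lambda(A,\cdot)$ is $\mathcal F_{\Lambda_-}$-measurable for each $A\in\mathcal F_\Lambda$; (d) $\gamma_\Lambda(B,\omega)=\mathbf 1_B(\omega)$ for all $B\in\mathcal F_{\Lambda_-\cup\Lambda^*}$. *)

theory Defs
  imports "HOL-Probability.Probability"
begin

text \<open>The countable poset S is the type 's (S = UNIV) with its order.\<close>

definition lower :: "'s::order \<Rightarrow> 's set" where
  "lower x = {y. y < x}"

definition upper :: "'s::order \<Rightarrow> 's set" where
  "upper x = {y. y > x}"

definition maxset :: "'s::order set \<Rightarrow> 's set" where
  "maxset U = {x\<in>U. \<forall>y. y > x \<longrightarrow> y \<notin> U}"

definition minset :: "'s::order set \<Rightarrow> 's set" where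
  "minset U = {x\<in>U. \<forall>y. y < x \<longrightarrow> y \<notin> U}"

definition past :: "'s::order set \<Rightarrow> 's set" where
  "past U = {x. x \<notin> U \<and> (\<exists>y\<in>U. x < y)}"

definition future :: "'s::order set \<Rightarrow> 's set" where
  "future U = {x. x \<notin> U \<and> (\<exists>y\<in>U. x > y)}"

definition outer :: "'s::order set \<Rightarrow> 's set" where
  "outer U = {x. \<forall>y\<in>U. \<not> (x \<le> y) \<and> \<not> (y \<le> x)}"

definition standing_assms :: "'s::order itself \<Rightarrow> bool" where
  "standing_assms _ \<longleftrightarrow> countable (UNIV :: 's set) \<and>
     (\<forall>x::'s. finite (maxset (lower x)) \<and> finite (minset (upper x)) \<and>
        (\<forall>y. y < x \<longrightarrow> (\<exists>y0\<in>maxset (lower x). y \<le> y0)) \<and>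
        (\<forall>z. z > x \<longrightarrow> (\<exists>z0\<in>minset (upper x). z0 \<le> z))) \<and>
     (\<forall>x::'s. \<exists>y. y < x)"

definition time_box :: "'s::order set \<Rightarrow> bool" where
  "time_box L \<longleftrightarrow> finite L \<and> past L \<inter> future L = {}"

definition Omega :: "'e measure \<Rightarrow> ('s \<Rightarrow> 'e) set" where
  "Omega M = space (Pi\<^sub>M UNIV (\<lambda>_::'s. M))"

definition coord_sigma :: "'e measure \<Rightarrow> 's set \<Rightarrow> ('s \<Rightarrow> 'e) measure" where
  "coord_sigma M U = sigma (Omega M)
     {(\<lambda>\<omega>. \<omega> i) -` A \<inter> Omega M | i A. i \<in> U \<and> A \<in> sets M}"

definition proper_oriented_kernel ::
  "'e measure \<Rightarrow> 's::order set \<Rightarrow> (('s \<Rightarrow> 'e) set \<Rightarrow> ('s \<Rightarrow> 'e) \<Rightarrow> real) \<Rightarrow> bool" where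
  "proper_oriented_kernel M L \<gamma> \<longleftrightarrow>
     (\<forall>\<omega>\<in>Omega M. \<exists>P. prob_space P \<and> space P = Omega M \<and>
         sets P = sets (coord_sigma M (- future L)) \<and>
         (\<forall>A\<in>sets P. measure P A = \<gamma> A \<omega>)) \<and>
     (\<forall>A\<in>sets (coord_sigma M (- future L)).
         \<gamma> A \<in> borel_measurable (coord_sigma M (past L \<union> outer L))) \<and>
     (\<forall>A\<in>sets (coord_sigma M L). \<gamma> A \<in> borel_measurable (coord_sigma M (past L))) \<and>
     (\<forall>B\<in>sets (coord_sigma M (past L \<union> outer L)). \<forall>\<omega>\<in>Omega M. \<gamma> B \<omega> = indicator B \<omega>)"

definition kernel_measure ::
  "'e measure \<Rightarrow> 's::order set \<Rightarrow> (('s \<Rightarrow> 'e) set \<Rightarrow> ('s \<Rightarrow> 'e) \<Rightarrow> real) \<Rightarrow> ('s \<Rightarrow> 'e) \<Rightarrow> ('s \<Rightarrow> 'e) measure" where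
  "kernel_measure M L \<gamma> \<omega> = measure_of (Omega M) (sets (coord_sigma M (- future L))) (\<lambda>A. ennreal (\<gamma> A \<omega>))"

definition kernel_comp ::
  "'e measure \<Rightarrow> 's::order set \<Rightarrow> (('s \<Rightarrow> 'e) set \<Rightarrow> ('s \<Rightarrow> 'e) \<Rightarrow> real) \<Rightarrow>
   (('s \<Rightarrow> 'e) set \<Rightarrow> ('s \<Rightarrow> 'e) \<Rightarrow> real) \<Rightarrow> ('s \<Rightarrow> 'e) set \<Rightarrow> ('s \<Rightarrow> 'e) \<Rightarrow> real" where
  "kernel_comp M D \<gamma>D \<gamma>L A \<omega> = (\<integral>\<sigma>. \<gamma>L A \<sigma> \<partial>kernel_measure M D \<gamma>D \<omega>)"

end

theory Submission
  imports Defs "HOL-Probability.Conditional_Expectation"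
begin

(* The heart of the argument is a measurability statement for a single proper oriented
   kernel gamma on a time box L: for V disjoint from the future of L, the map
   omega |-> gamma(., omega) restricted to F_V is measurable with respect to F_W for every
   W containing past L and V - L.  By Dynkin's pi-lambda theorem it suffices to check this
   on the rectangles C \<inter> B with C in F_{V \<inter> L} and B in F_{V - L}; there properness yields
   the product rule gamma(C \<inter> B) = gamma(C) 1_B, whose factors are F_W-measurable.
   Consequently gamma(A, .) and every integral against gamma(., omega) are F_W-measurable. *)

section \<open>Coordinate sigma-algebras\<close>

definition coord_generators :: "'e measure \<Rightarrow> 's set \<Rightarrow> ('s \<Rightarrow> 'e) set set" where
  "coord_generators M U = {(\<lambda>\<omega>. \<omega> i) -` A \<inter> Omega M | i A. i \<in> U \<and> A \<in> sets M}"

lemma coord_generators_Pow: "coord_generators M U \<subseteq> Pow (Omega M)"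
  unfolding coord_generators_def by auto

lemma space_coord_sigma [simp]: "space (coord_sigma M U) = Omega M"
  unfolding coord_sigma_def by (simp add: space_measure_of_conv)

lemma sets_coord_sigma: "sets (coord_sigma M U) = sigma_sets (Omega M) (coord_generators M U)"
  unfolding coord_sigma_def coord_generators_def[symmetric]
  using coord_generators_Pow by (rule sets_measure_of)

lemma coord_event_in_coord_sigma:
  "i \<in> U \<Longrightarrow> A \<in> sets M \<Longrightarrow> (\<lambda>\<omega>. \<omega> i) -` A \<inter> Omega M \<in> sets (coord_sigma M U)"
  unfolding sets_coord_sigma coord_generators_def by (rule sigma_sets.Basic) auto

lemma sets_coord_sigma_mono: "U \<subseteq> V \<Longrightarrow> sets (coord_sigma M U) \<subseteq> sets (coord_sigma M V)"
  unfolding sets_coord_sigma by (rule sigma_sets_mono') (auto simp: coord_generators_def)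

lemma measurable_coord_sigma_mono:
  "U \<subseteq> V \<Longrightarrow> f \<in> measurable (coord_sigma M U) N \<Longrightarrow> f \<in> measurable (coord_sigma M V) N"
  by (rule measurable_from_subalg) (auto simp: subalgebra_def dest: sets_coord_sigma_mono)

text \<open>The rectangles \<open>C \<inter> B\<close> with \<open>C \<in> F\<^sub>U\<close> and \<open>B \<in> F\<^sub>V\<close> form a pi-system generating
  \<open>F\<^bsub>U \<union> V\<^esub>\<close>; this is what makes Dynkin's theorem applicable below.\<close>

definition coord_rectangles :: "'e measure \<Rightarrow> 's set \<Rightarrow> 's set \<Rightarrow> ('s \<Rightarrow> 'e) set set" where
  "coord_rectangles M U V =
     {C \<inter> B | C B. C \<in> sets (coord_sigma M U) \<and> B \<in> sets (coord_sigma M V)}"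

lemma coord_rectangles_Int_stable: "Int_stable (coord_rectangles M U V)"
  unfolding Int_stable_def coord_rectangles_def
proof (intro ballI)
  fix X Y assume "X \<in> {C \<inter> B |C B. C \<in> sets (coord_sigma M U) \<and> B \<in> sets (coord_sigma M V)}"
    and "Y \<in> {C \<inter> B |C B. C \<in> sets (coord_sigma M U) \<and> B \<in> sets (coord_sigma M V)}"
  then obtain C1 B1 C2 B2 where "X \<inter> Y = (C1 \<inter> C2) \<inter> (B1 \<inter> B2)"
    "C1 \<in> sets (coord_sigma M U)" "C2 \<in> sets (coord_sigma M U)"
    "B1 \<in> sets (coord_sigma M V)" "B2 \<in> sets (coord_sigma M V)" by blast
  then show "X \<inter> Y \<in> {C \<inter> B |C B. C \<in> sets (coord_sigma M U) \<and> B \<in> sets (coord_sigma M V)}"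
    by blast
qed

lemma coord_rectangles_Pow: "coord_rectangles M U V \<subseteq> Pow (Omega M)"
  unfolding coord_rectangles_def using sets.sets_into_space by fastforce

lemma sets_coord_sigma_union:
  "sets (coord_sigma M (U \<union> V)) = sigma_sets (Omega M) (coord_rectangles M U V)"
proof
  have top: "Omega M \<in> sets (coord_sigma M W)" for W :: "'s set"
    using sets.top[of "coord_sigma M W"] by simp
  have "coord_generators M (U \<union> V) \<subseteq> coord_rectangles M U V"
  proof
    fix X assume "X \<in> coord_generators M (U \<union> V)"
    then obtain i A where X: "X = (\<lambda>\<omega>. \<omega> i) -` A \<inter> Omega M" "i \<in> U \<union> V" "A \<in> sets M"
      unfolding coord_generators_def by blast
    show "X \<in> coord_rectangles M U V"
    proof (cases "i \<in> U")
      case True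
      then have "X \<in> sets (coord_sigma M U)" using coord_event_in_coord_sigma X by simp
      moreover have "X = X \<inter> Omega M" using X(1) by blast
      ultimately show ?thesis using top[of V] unfolding coord_rectangles_def by blast
    next
      case False
      then have "X \<in> sets (coord_sigma M V)" using coord_event_in_coord_sigma X by simp
      moreover have "X = Omega M \<inter> X" using X(1) by blast
      ultimately show ?thesis using top[of U] unfolding coord_rectangles_def by blast
    qed
  qed
  then show "sets (coord_sigma M (U \<union> V)) \<subseteq> sigma_sets (Omega M) (coord_rectangles M U V)"
    unfolding sets_coord_sigma[of M "U \<union> V"] by (rule sigma_sets_mono')
  have "coord_rectangles M U V \<subseteq> sets (coord_sigma M (U \<union> V))"
    unfolding coord_rectangles_def
    using sets_coord_sigma_mono[of U "U \<union> V" M] sets_coord_sigma_mono[of V "U \<union> V" M] by blast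
  then show "sigma_sets (Omega M) (coord_rectangles M U V) \<subseteq> sets (coord_sigma M (U \<union> V))"
    using sets.sigma_sets_subset'[of "coord_rectangles M U V" "coord_sigma M (U \<union> V)" "Omega M"]
      sets.top[of "coord_sigma M (U \<union> V)"] by simp
qed

lemma outside_future_in_past_outer:
  "(x::'s::order) \<notin> L \<Longrightarrow> x \<notin> future L \<Longrightarrow> x \<in> past L \<union> outer L"
  unfolding past_def future_def outer_def by (auto simp: order.order_iff_strict)

lemma past_outer_subset_cofuture:
  "time_box L \<Longrightarrow> past L \<union> outer L \<subseteq> - future (L::'s::order set)"
  unfolding time_box_def past_def future_def outer_def by (auto simp: order.order_iff_strict)

lemma self_subset_cofuture: "L \<subseteq> - future (L::'s::order set)"
  unfolding future_def by auto

lemma kernel_measure: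
  assumes k: "proper_oriented_kernel M L \<gamma>" and \<omega>: "\<omega> \<in> Omega M"
  shows "prob_space (kernel_measure M L \<gamma> \<omega>)"
    and "sets (kernel_measure M L \<gamma> \<omega>) = sets (coord_sigma M (- future L))"
    and "space (kernel_measure M L \<gamma> \<omega>) = Omega M"
    and "\<And>A. A \<in> sets (coord_sigma M (- future L)) \<Longrightarrow> measure (kernel_measure M L \<gamma> \<omega>) A = \<gamma> A \<omega>"
proof -
  obtain P where P: "prob_space P" "space P = Omega M" "sets P = sets (coord_sigma M (- future L))"
    "\<And>A. A \<in> sets P \<Longrightarrow> measure P A = \<gamma> A \<omega>"
    using assms unfolding proper_oriented_kernel_def by blast
  have "kernel_measure M L \<gamma> \<omega> = measure_of (space P) (sets P) (emeasure P)"
    unfolding kernel_measure_def P(2) P(3)[symmetric]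
  proof (rule measure_of_eq)
    show "sets P \<subseteq> Pow (Omega M)" using sets.sets_into_space P(2) by blast
    fix A assume "A \<in> sigma_sets (Omega M) (sets P)"
    then have "A \<in> sets P" using sets.sigma_sets_eq P(2) by metis
    then show "ennreal (\<gamma> A \<omega>) = emeasure P A"
      using P by (simp add: finite_measure.emeasure_eq_measure prob_space.finite_measure)
  qed
  then have "kernel_measure M L \<gamma> \<omega> = P" by (simp add: measure_of_of_measure)
  then show "prob_space (kernel_measure M L \<gamma> \<omega>)"
    "sets (kernel_measure M L \<gamma> \<omega>) = sets (coord_sigma M (- future L))"
    "space (kernel_measure M L \<gamma> \<omega>) = Omega M"
    "\<And>A. A \<in> sets (coord_sigma M (- future L)) \<Longrightarrow> measure (kernel_measure M L \<gamma> \<omega>) A = \<gamma> A \<omega>"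
    using P by auto
qed

text \<open>Product rule: an event determined by the past and outer time of \<open>L\<close> is almost surely
  decided under \<open>\<gamma>(\<cdot>, \<omega>)\<close>, so it factors out of \<open>\<gamma>\<close> as an indicator.\<close>

lemma kernel_product_rule:
  assumes tb: "time_box L" and k: "proper_oriented_kernel M L \<gamma>" and \<omega>: "\<omega> \<in> Omega M"
    and C: "C \<in> sets (coord_sigma M L)" and B: "B \<in> sets (coord_sigma M (past L \<union> outer L))"
  shows "\<gamma> (C \<inter> B) \<omega> = \<gamma> C \<omega> * indicator B \<omega>"
proof -
  let ?P = "kernel_measure M L \<gamma> \<omega>"
  interpret P: prob_space ?P using kernel_measure(1)[OF k \<omega>] .
  have sets_P: "sets ?P = sets (coord_sigma M (- future L))" using kernel_measure(2)[OF k \<omega>] .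
  have C': "C \<in> sets ?P" using sets_coord_sigma_mono[OF self_subset_cofuture] C sets_P by blast
  have B': "B \<in> sets ?P" using sets_coord_sigma_mono[OF past_outer_subset_cofuture[OF tb]] B sets_P by blast
  have measure_B: "measure ?P B = indicator B \<omega>"
    using kernel_measure(4)[OF k \<omega>] B' sets_P k \<omega> B unfolding proper_oriented_kernel_def by metis
  have "measure ?P (C \<inter> B) = measure ?P C * indicator B \<omega>"
  proof (cases "\<omega> \<in> B")
    case True
    then have "measure ?P (space ?P - B) = 0" using P.prob_compl[OF B'] measure_B by simp
    moreover have "C - B \<subseteq> space ?P - B" using C' sets.sets_into_space by blast
    ultimately have "measure ?P (C - B) = 0"
      by (metis B' P.finite_measure_mono measure_nonneg antisym sets.Diff sets.top)
    moreover have "measure ?P C = measure ?P (C \<inter> B) + measure ?P (C - B)"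
      using B' C' P.finite_measure_Union[of "C \<inter> B" "C - B"]
      by (metis Int_Diff_Un Int_Diff_disjoint sets.Diff sets.Int)
    ultimately show ?thesis using True by simp
  next
    case False
    have "measure ?P (C \<inter> B) \<le> measure ?P B" using B' C' by (simp add: P.finite_measure_mono)
    then show ?thesis using False measure_B by (simp add: antisym)
  qed
  then show ?thesis using kernel_measure(4)[OF k \<omega>] C' B' sets_P by simp
qed

definition restricted_kernel ::
  "'e measure \<Rightarrow> 's::order set \<Rightarrow> (('s \<Rightarrow> 'e) set \<Rightarrow> ('s \<Rightarrow> 'e) \<Rightarrow> real) \<Rightarrow> 's set \<Rightarrow>
   ('s \<Rightarrow> 'e) \<Rightarrow> ('s \<Rightarrow> 'e) measure" where
  "restricted_kernel M L \<gamma> V \<omega> = restr_to_subalg (kernel_measure M L \<gamma> \<omega>) (coord_sigma M V)"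

lemma kernel_measure_subalgebra:
  assumes "proper_oriented_kernel M L \<gamma>" "\<omega> \<in> Omega M" "V \<subseteq> - future L"
  shows "subalgebra (kernel_measure M L \<gamma> \<omega>) (coord_sigma M V)"
  unfolding subalgebra_def
  using kernel_measure[OF assms(1,2)] sets_coord_sigma_mono[OF assms(3), of M] by auto

lemma restricted_kernel:
  assumes k: "proper_oriented_kernel M L \<gamma>" and \<omega>: "\<omega> \<in> Omega M" and V: "V \<subseteq> - future L"
  shows "prob_space (restricted_kernel M L \<gamma> V \<omega>)"
    and "sets (restricted_kernel M L \<gamma> V \<omega>) = sets (coord_sigma M V)"
    and "space (restricted_kernel M L \<gamma> V \<omega>) = Omega M"
    and "\<And>A. A \<in> sets (coord_sigma M V) \<Longrightarrow> emeasure (restricted_kernel M L \<gamma> V \<omega>) A = \<gamma> A \<omega>"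
    and "\<And>A. A \<in> sets (coord_sigma M V) \<Longrightarrow> measure (restricted_kernel M L \<gamma> V \<omega>) A = \<gamma> A \<omega>"
proof -
  note sub = kernel_measure_subalgebra[OF k \<omega> V]
  interpret P: prob_space "kernel_measure M L \<gamma> \<omega>" using kernel_measure(1)[OF k \<omega>] .
  show "prob_space (restricted_kernel M L \<gamma> V \<omega>)"
    unfolding restricted_kernel_def using sub P.prob_space_axioms by (rule prob_space_restr_to_subalg)
  show "sets (restricted_kernel M L \<gamma> V \<omega>) = sets (coord_sigma M V)"
    unfolding restricted_kernel_def using sub by (rule sets_restr_to_subalg)
  show "space (restricted_kernel M L \<gamma> V \<omega>) = Omega M"
    unfolding restricted_kernel_def by (simp add: space_restr_to_subalg kernel_measure(3)[OF k \<omega>])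
  show emeasure_eq: "emeasure (restricted_kernel M L \<gamma> V \<omega>) A = \<gamma> A \<omega>"
    if A: "A \<in> sets (coord_sigma M V)" for A
  proof -
    have "A \<in> sets (coord_sigma M (- future L))" using A sets_coord_sigma_mono[OF V] by blast
    then show ?thesis
      using emeasure_restr_to_subalg[OF sub A] kernel_measure(2,4)[OF k \<omega>]
      unfolding restricted_kernel_def by (simp add: P.emeasure_eq_measure)
  qed
  show "measure (restricted_kernel M L \<gamma> V \<omega>) A = \<gamma> A \<omega>" if A: "A \<in> sets (coord_sigma M V)" for A
  proof -
    have "A \<in> sets (coord_sigma M (- future L))" using A sets_coord_sigma_mono[OF V] by blast
    then have "\<gamma> A \<omega> = measure (kernel_measure M L \<gamma> \<omega>) A" using kernel_measure(4)[OF k \<omega>] by simp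
    then have "0 \<le> \<gamma> A \<omega>" by simp
    then show ?thesis using emeasure_eq[OF A] unfolding measure_def by simp
  qed
qed

section \<open>Measurability of a proper oriented kernel in its boundary condition\<close>

text \<open>On a rectangle \<open>C \<inter> B\<close> the product rule shows that \<open>\<gamma>(C \<inter> B, \<cdot>)\<close> depends only on the
  coordinates in \<open>past L\<close> (through \<open>\<gamma>(C, \<cdot>)\<close>) and those defining \<open>B\<close>.\<close>

lemma kernel_rectangle_measurable:
  assumes tb: "time_box L" and k: "proper_oriented_kernel M L \<gamma>" and W: "past L \<subseteq> W"
    and C: "C \<in> sets (coord_sigma M L)" and B: "B \<in> sets (coord_sigma M (past L \<union> outer L))"
    and BW: "B \<in> sets (coord_sigma M W)"
  shows "\<gamma> (C \<inter> B) \<in> borel_measurable (coord_sigma M W)"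
proof -
  have "\<gamma> C \<in> borel_measurable (coord_sigma M W)"
    using k C measurable_coord_sigma_mono[OF W] unfolding proper_oriented_kernel_def by blast
  then have "(\<lambda>\<omega>. \<gamma> C \<omega> * indicator B \<omega>) \<in> borel_measurable (coord_sigma M W)"
    using BW by measurable
  then show ?thesis
    by (rule measurable_cong[THEN iffD1, rotated]) (simp add: kernel_product_rule[OF tb k _ C B])
qed

text \<open>By Dynkin's theorem it suffices
  to test on the rectangles \<open>C \<inter> B\<close> with \<open>C \<in> F\<^bsub>V \<inter> L\<^esub>\<close>, \<open>B \<in> F\<^bsub>V - L\<^esub>\<close>.\<close>

lemma restricted_kernel_measurable:
  assumes tb: "time_box L" and k: "proper_oriented_kernel M L \<gamma>"
    and V: "V \<subseteq> - future L" and W_past: "past L \<subseteq> W" and W_V: "V - L \<subseteq> W"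
  shows "restricted_kernel M L \<gamma> V \<in> measurable (coord_sigma M W) (subprob_algebra (coord_sigma M V))"
proof (rule measurable_subprob_algebra_generated[OF _ coord_rectangles_Int_stable coord_rectangles_Pow])
  have "V = (V \<inter> L) \<union> (V - L)" by blast
  then show "sets (coord_sigma M V) = sigma_sets (Omega M) (coord_rectangles M (V \<inter> L) (V - L))"
    by (metis sets_coord_sigma_union)
  fix \<omega> assume "\<omega> \<in> space (coord_sigma M W)"
  then have \<omega>: "\<omega> \<in> Omega M" by simp
  show "subprob_space (restricted_kernel M L \<gamma> V \<omega>)"
    using restricted_kernel(1)[OF k \<omega> V] by (rule prob_space_imp_subprob_space)
  show "sets (restricted_kernel M L \<gamma> V \<omega>) = sets (coord_sigma M V)"
    using restricted_kernel(2)[OF k \<omega> V] .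
next
  fix A assume "A \<in> coord_rectangles M (V \<inter> L) (V - L)"
  then obtain C B where A: "A = C \<inter> B" and
    C: "C \<in> sets (coord_sigma M (V \<inter> L))" and B: "B \<in> sets (coord_sigma M (V - L))"
    unfolding coord_rectangles_def by blast
  have "V - L \<subseteq> past L \<union> outer L" using V outside_future_in_past_outer by blast
  then have "\<gamma> (C \<inter> B) \<in> borel_measurable (coord_sigma M W)"
    using C B sets_coord_sigma_mono[of "V \<inter> L" L M] sets_coord_sigma_mono[of "V - L" _ M] W_V
    by (intro kernel_rectangle_measurable[OF tb k W_past]) blast+
  moreover have "A \<in> sets (coord_sigma M V)"
    using A C B sets_coord_sigma_mono[of "V \<inter> L" V M] sets_coord_sigma_mono[of "V - L" V M] by blast
  ultimately show "(\<lambda>\<omega>. emeasure (restricted_kernel M L \<gamma> V \<omega>) A) \<in> borel_measurable (coord_sigma M W)"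
    using A by (subst measurable_cong[where g="\<lambda>\<omega>. ennreal (\<gamma> A \<omega>)"])
      (auto simp: restricted_kernel(4)[OF k _ V])
next
  have "(\<lambda>\<omega>. emeasure (restricted_kernel M L \<gamma> V \<omega>) (Omega M)) \<in> borel_measurable (coord_sigma M W)
    \<longleftrightarrow> (\<lambda>_. 1::ennreal) \<in> borel_measurable (coord_sigma M W)"
    by (intro measurable_cong) (metis prob_space.emeasure_space_1 restricted_kernel(1,3)[OF k _ V]
        space_coord_sigma)
  then show "(\<lambda>\<omega>. emeasure (restricted_kernel M L \<gamma> V \<omega>) (Omega M)) \<in> borel_measurable (coord_sigma M W)"
    by simp
qed

lemma kernel_measurable:
  assumes tb: "time_box L" and k: "proper_oriented_kernel M L \<gamma>"
    and V: "V \<subseteq> - future L" and W_past: "past L \<subseteq> W" and W_V: "V - L \<subseteq> W"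
    and A: "A \<in> sets (coord_sigma M V)"
  shows "\<gamma> A \<in> borel_measurable (coord_sigma M W)"
proof -
  have "(\<lambda>\<omega>. measure (restricted_kernel M L \<gamma> V \<omega>) A) \<in> borel_measurable (coord_sigma M W)"
    by (rule measurable_compose[OF restricted_kernel_measurable[OF tb k V W_past W_V]
          measurable_measure_subprob_algebra[OF A]])
  then show ?thesis
    by (rule measurable_cong[THEN iffD1, rotated]) (simp add: restricted_kernel(5)[OF k _ V A])
qed

lemma kernel_integral_measurable:
  fixes f :: "('s::order \<Rightarrow> 'e) \<Rightarrow> real"
  assumes tb: "time_box L" and k: "proper_oriented_kernel M L \<gamma>"
    and V: "V \<subseteq> - future L" and W_past: "past L \<subseteq> W" and W_V: "V - L \<subseteq> W"
    and f: "f \<in> borel_measurable (coord_sigma M V)"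
  shows "(\<lambda>\<omega>. \<integral>\<sigma>. f \<sigma> \<partial>kernel_measure M L \<gamma> \<omega>) \<in> borel_measurable (coord_sigma M W)"
proof -
  have "(\<lambda>\<omega>. \<integral>\<sigma>. f \<sigma> \<partial>restricted_kernel M L \<gamma> V \<omega>) \<in> borel_measurable (coord_sigma M W)"
    by (rule measurable_compose[OF restricted_kernel_measurable[OF tb k V W_past W_V]
          integral_measurable_subprob_algebra[OF f]])
  then show ?thesis
    by (rule measurable_cong[THEN iffD1, rotated])
      (simp add: restricted_kernel_def integral_subalgebra2[OF kernel_measure_subalgebra[OF k _ V] f])
qed

section \<open>Times of the union of two compatible time boxes\<close>

context
  fixes L D :: "'s::order set"
  assumes disjoint: "D \<inter> L = {}"
    and D_not_after_L: "D \<inter> future L = {}"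
    and past_L_not_after_D: "past L \<inter> future D = {}"
begin

lemma future_union: "future (L \<union> D) = future L \<union> (future D - L)"
  using D_not_after_L unfolding future_def by auto

lemma past_D_disjoint_L: "past D \<inter> L = {}"
proof -
  have False if "x \<in> L" "x < z" "z \<in> D" for x z
  proof -
    have "z \<in> future L" using that disjoint unfolding future_def by auto
    then show False using D_not_after_L \<open>z \<in> D\<close> by auto
  qed
  then show ?thesis unfolding past_def by auto
qed

lemma past_union: "past (L \<union> D) = past D \<union> (past L - D)"
  using past_D_disjoint_L unfolding past_def by auto

lemma past_D_disjoint_future_L: "past D \<inter> future L = {}"
proof (rule ccontr)
  assume "past D \<inter> future L \<noteq> {}"
  then obtain x z y where "z \<in> D" "x < z" "y \<in> L" "y < x"
    unfolding past_def future_def by blast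
  moreover have "z \<notin> L" using disjoint calculation by blast
  ultimately have "z \<in> D \<inter> future L" unfolding future_def by (auto dest: order.strict_trans)
  then show False using D_not_after_L by blast
qed

lemma time_box_union:
  assumes "time_box L" "time_box D"
  shows "time_box (L \<union> D)"
proof -
  have "past L \<inter> future L = {}" "past D \<inter> future D = {}"
    using assms unfolding time_box_def by auto
  then have "past (L \<union> D) \<inter> future (L \<union> D) = {}"
    unfolding future_union past_union using past_D_disjoint_future_L past_L_not_after_D by blast
  then show ?thesis using assms unfolding time_box_def by auto
qed

lemma cofuture_union_subset: "- future (L \<union> D) \<subseteq> - future L"
  unfolding future_union by blast

lemma union_subset_cofuture: "L \<union> D \<subseteq> - future L"
  using D_not_after_L self_subset_cofuture by blast

lemma cofuture_boundary_subset: "past L \<union> (- future (L \<union> D) - L) \<subseteq> - future D"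
  unfolding future_union using past_L_not_after_D by blast

lemma box_boundary_subset: "past L \<union> (L \<union> D - L) \<subseteq> - future D"
  using past_L_not_after_D unfolding future_def by blast

lemma past_D_subset_past_union: "past D \<subseteq> past (L \<union> D)"
  unfolding past_union by blast

lemma cofuture_boundary_minus_D:
  "past L \<union> (- future (L \<union> D) - L) - D \<subseteq> past (L \<union> D) \<union> outer (L \<union> D)"
  using outside_future_in_past_outer[of _ "L \<union> D"] unfolding past_union by blast

lemma box_boundary_minus_D: "past L \<union> (L \<union> D - L) - D \<subseteq> past (L \<union> D)"
  unfolding past_union by blast

lemma past_outer_union_subset_L: "past (L \<union> D) \<union> outer (L \<union> D) \<subseteq> past L \<union> outer L"
proof -
  have "past D \<subseteq> past L \<union> outer L"
    using past_D_disjoint_L past_D_disjoint_future_L outside_future_in_past_outer by blast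
  moreover have "outer (L \<union> D) \<subseteq> outer L" unfolding outer_def by blast
  ultimately show ?thesis unfolding past_union by blast
qed

lemma past_outer_union_subset_D: "past (L \<union> D) \<union> outer (L \<union> D) \<subseteq> past D \<union> outer D"
proof -
  have "past L - D \<subseteq> past D \<union> outer D"
    using past_L_not_after_D outside_future_in_past_outer by blast
  moreover have "outer (L \<union> D) \<subseteq> outer D" unfolding outer_def by blast
  ultimately show ?thesis unfolding past_union by blast
qed

section \<open>The composed kernel\<close>

context
  fixes M :: "'e measure" and \<gamma>L \<gamma>D :: "('s \<Rightarrow> 'e) set \<Rightarrow> ('s \<Rightarrow> 'e) \<Rightarrow> real"
  assumes tL: "time_box L" and tD: "time_box D"
    and kL: "proper_oriented_kernel M L \<gamma>L" and kD: "proper_oriented_kernel M D \<gamma>D"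
begin

text \<open>Part (ii) of the theorem, in the sharper form needed below: on \<open>F\<^bsub>S - \<Gamma>\<^sub>+\<^esub>\<close> the kernel
  \<open>\<gamma>\<^sub>L\<close> only looks at coordinates outside the future of \<open>D\<close>.\<close>

lemma kernel_L_measurable_cofuture:
  "A \<in> sets (coord_sigma M (- future (L \<union> D))) \<Longrightarrow>
   \<gamma>L A \<in> borel_measurable (coord_sigma M (past L \<union> (- future (L \<union> D) - L)))"
  by (rule kernel_measurable[OF tL kL cofuture_union_subset]) auto

lemma kernel_L_measurable_box:
  "A \<in> sets (coord_sigma M (L \<union> D)) \<Longrightarrow>
   \<gamma>L A \<in> borel_measurable (coord_sigma M (past L \<union> (L \<union> D - L)))"
  by (rule kernel_measurable[OF tL kL union_subset_cofuture]) auto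

text \<open>\<open>(\<gamma>\<^sub>D\<gamma>\<^sub>L)(\<cdot>, \<omega>)\<close> is the probability measure obtained by binding \<open>\<gamma>\<^sub>D(\<cdot>, \<omega>)\<close> with the
  restriction of \<open>\<gamma>\<^sub>L\<close> to \<open>F\<^bsub>S - \<Gamma>\<^sub>+\<^esub>\<close>.\<close>

lemma composed_kernel_measure:
  assumes \<omega>: "\<omega> \<in> Omega M"
  shows "\<exists>P. prob_space P \<and> space P = Omega M \<and> sets P = sets (coord_sigma M (- future (L \<union> D))) \<and>
           (\<forall>A\<in>sets P. measure P A = kernel_comp M D \<gamma>D \<gamma>L A \<omega>)"
proof -
  let ?V = "- future (L \<union> D)"
  let ?\<mu> = "kernel_measure M D \<gamma>D \<omega>"
  let ?K = "restricted_kernel M L \<gamma>L ?V"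
  interpret \<mu>: prob_space ?\<mu> using kernel_measure(1)[OF kD \<omega>] .
  have space_\<mu>: "space ?\<mu> = Omega M" using kernel_measure(3)[OF kD \<omega>] .
  have W: "past L \<subseteq> - future D" "?V - L \<subseteq> - future D"
    using cofuture_boundary_subset by auto
  have "?K \<in> measurable (coord_sigma M (- future D)) (subprob_algebra (coord_sigma M ?V))"
    using restricted_kernel_measurable[OF tL kL cofuture_union_subset W] .
  then have K: "?K \<in> measurable ?\<mu> (subprob_algebra (coord_sigma M ?V))"
    using measurable_cong_sets[OF kernel_measure(2)[OF kD \<omega>] refl] by blast
  have sets_K: "sets (?K \<sigma>) = sets (coord_sigma M ?V)" if "\<sigma> \<in> space ?\<mu>" for \<sigma>
    using restricted_kernel(2)[OF kL _ cofuture_union_subset] that space_\<mu> by simp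
  have nonempty: "space ?\<mu> \<noteq> {}" using \<omega> space_\<mu> by auto
  show ?thesis
  proof (intro exI conjI ballI)
    show "prob_space (?\<mu> \<bind> ?K)"
      by (rule \<mu>.prob_space_bind[OF AE_I2 K])
        (use restricted_kernel(1)[OF kL _ cofuture_union_subset] space_\<mu> in auto)
    show sets_bind: "sets (?\<mu> \<bind> ?K) = sets (coord_sigma M ?V)"
      using sets_bind[OF sets_K nonempty] .
    show "space (?\<mu> \<bind> ?K) = Omega M"
      using space_bind[OF sets_K nonempty] by simp
    fix A assume "A \<in> sets (?\<mu> \<bind> ?K)"
    then have A: "A \<in> sets (coord_sigma M ?V)" using sets_bind by simp
    have "measure (?\<mu> \<bind> ?K) A = (\<integral>\<sigma>. measure (?K \<sigma>) A \<partial>?\<mu>)"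
      by (rule \<mu>.measure_bind[OF K A])
    also have "\<dots> = (\<integral>\<sigma>. \<gamma>L A \<sigma> \<partial>?\<mu>)"
      by (rule Bochner_Integration.integral_cong[OF refl])
        (use restricted_kernel(5)[OF kL _ cofuture_union_subset A] space_\<mu> in auto)
    finally show "measure (?\<mu> \<bind> ?K) A = kernel_comp M D \<gamma>D \<gamma>L A \<omega>"
      unfolding kernel_comp_def .
  qed
qed

lemma composed_kernel_measurable_cofuture:
  assumes A: "A \<in> sets (coord_sigma M (- future (L \<union> D)))"
  shows "kernel_comp M D \<gamma>D \<gamma>L A \<in> borel_measurable (coord_sigma M (past (L \<union> D) \<union> outer (L \<union> D)))"
  unfolding kernel_comp_def
  using kernel_integral_measurable[OF tD kD cofuture_boundary_subset _ cofuture_boundary_minus_D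
      kernel_L_measurable_cofuture[OF A]] past_D_subset_past_union
  by blast

lemma composed_kernel_measurable_box:
  assumes A: "A \<in> sets (coord_sigma M (L \<union> D))"
  shows "kernel_comp M D \<gamma>D \<gamma>L A \<in> borel_measurable (coord_sigma M (past (L \<union> D)))"
  unfolding kernel_comp_def
  using kernel_integral_measurable[OF tD kD box_boundary_subset past_D_subset_past_union
      box_boundary_minus_D kernel_L_measurable_box[OF A]] .

text \<open>Axiom (d): events of the past and outer time of \<open>\<Gamma>\<close> are fixed by both \<open>\<gamma>\<^sub>L\<close> and \<open>\<gamma>\<^sub>D\<close>,
  hence by their composition.\<close>

lemma composed_kernel_boundary:
  assumes B: "B \<in> sets (coord_sigma M (past (L \<union> D) \<union> outer (L \<union> D)))" and \<omega>: "\<omega> \<in> Omega M"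
  shows "kernel_comp M D \<gamma>D \<gamma>L B \<omega> = indicator B \<omega>"
proof -
  let ?\<mu> = "kernel_measure M D \<gamma>D \<omega>"
  have B_L: "B \<in> sets (coord_sigma M (past L \<union> outer L))"
    using B sets_coord_sigma_mono[OF past_outer_union_subset_L] by blast
  have B_D: "B \<in> sets (coord_sigma M (past D \<union> outer D))"
    using B sets_coord_sigma_mono[OF past_outer_union_subset_D] by blast
  then have B_cofuture: "B \<in> sets (coord_sigma M (- future D))"
    using sets_coord_sigma_mono[OF past_outer_subset_cofuture[OF tD]] by blast
  have "kernel_comp M D \<gamma>D \<gamma>L B \<omega> = (\<integral>\<sigma>. indicator B \<sigma> \<partial>?\<mu>)"
    unfolding kernel_comp_def
    by (rule Bochner_Integration.integral_cong[OF refl])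
      (use kL B_L kernel_measure(3)[OF kD \<omega>] in \<open>auto simp: proper_oriented_kernel_def\<close>)
  also have "\<dots> = measure ?\<mu> B" using B_cofuture kernel_measure(2)[OF kD \<omega>] by simp
  also have "\<dots> = \<gamma>D B \<omega>" using kernel_measure(4)[OF kD \<omega> B_cofuture] .
  also have "\<dots> = indicator B \<omega>" using kD B_D \<omega> unfolding proper_oriented_kernel_def by blast
  finally show ?thesis .
qed

theorem composed_proper_oriented_kernel:
  "proper_oriented_kernel M (L \<union> D) (kernel_comp M D \<gamma>D \<gamma>L)"
  unfolding proper_oriented_kernel_def
  using composed_kernel_measure composed_kernel_measurable_cofuture
    composed_kernel_measurable_box composed_kernel_boundary
  by blast

end

end

theorem mainTheorem16:
  fixes M :: "'e measure" and L D :: "'s::order set"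
    and \<gamma>L \<gamma>D :: "('s \<Rightarrow> 'e) set \<Rightarrow> ('s \<Rightarrow> 'e) \<Rightarrow> real"
  assumes "standing_assms TYPE('s)"
    and "time_box L" and "time_box D"
    and "D \<inter> L = {}" and "D \<inter> future L = {}" and "past L \<inter> future D = {}"
    and "proper_oriented_kernel M L \<gamma>L" and "proper_oriented_kernel M D \<gamma>D"
  shows "time_box (L \<union> D) \<and>
         future (L \<union> D) = future L \<union> (future D - L) \<and>
         past (L \<union> D) = past D \<union> (past L - D) \<and>
         (\<forall>A\<in>sets (coord_sigma M (- future (L \<union> D))).
            \<gamma>L A \<in> borel_measurable (coord_sigma M (- future D))) \<and>
         proper_oriented_kernel M (L \<union> D) (kernel_comp M D \<gamma>D \<gamma>L)"
proof -
  note geometry = assms(4-6) and kernels = assms(2,3,7,8)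
  have "\<gamma>L A \<in> borel_measurable (coord_sigma M (- future D))"
    if "A \<in> sets (coord_sigma M (- future (L \<union> D)))" for A
    using kernel_L_measurable_cofuture[OF geometry kernels that]
      measurable_coord_sigma_mono[OF cofuture_boundary_subset[OF geometry]] by blast
  then show ?thesis
    using time_box_union[OF geometry assms(2,3)] future_union[OF geometry]
      past_union[OF geometry] composed_proper_oriented_kernel[OF geometry kernels]
    by blast
qed

end
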